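(* Every function $f:\mathbb{N}^n\to\mathbb{N}$ that is representable in $\lambda\mu\mathrm{T}$ is representable in Gödel's T: if a closed term $t$ with $\emptyset;\emptyset\vdash t:\mathbb{N}^n\to\mathbb{N}$ represents $f$ in $\lambda\mu\mathrm{T}$, then there is a closed $\lambda\mathrm{T}$-term $t'$ with $\vdash t':\mathbb{N}^n\to\mathbb{N}$ that represents $f$ in Gödel's T.
   Context: $\lambda\mu\mathrm{T}$: types $\rho ::= \mathbb{N}\mid\sigma\to\tau$; terms $t,r,s ::= x \mid \lambda x{:}\rho.r \mid t\,s \mid \mu\alpha{:}\rho.c \mid 0 \mid \mathsf{S}\,t \mid \mathsf{nrec}_\rho\ r\ s\ t$ and commands $c ::= [\alpha]t$ ($x$ ranging over $\lambda$-variables, $\alpha$ over $\mu$-variables). Typing judgments $\Gamma;\Delta\vdash t:\rho$ and $\Gamma;\Delta\vdash c$ are generated by: (var) $x:\rho\in\Gamma \Rightarrow \Gamma;\Delta\vdash x:\rho$; (lambda) $\Gamma,x:\sigma;\Delta\vdash t:\tau \Rightarrow \Gamma;\Delta\vdash\lambda x{:}\sigma.t:\sigma\to\tau$; (app) $\Gamma;\Delta\vdash t:\sigma\to\tau$, $\Gamma;\Delta\vdash s:\sigma$ $\Rightarrow \Gamma;\Delta\vdash ts:\tau$; (zero) $\Gamma;\Delta\vdash 0:\mathbb{N}$; (suc) $\Gamma;\Delta\vdash t:\mathbb{N}\Rightarrow\Gamma;\Delta\vdash \mathsf{S}\,t:\mathbb{N}$; (nrec) $\Gamma;\Delta\vdash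 r:\rho$, $\Gamma;\Delta\vdash s:\mathbb{N}\to\rho\to\rho$, $\Gamma;\Delta\vdash t:\mathbb{N}$ $\Rightarrow \Gamma;\Delta\vdash\mathsf{nrec}_\rho\ r\ s\ t:\rho$; (activate) $\Gamma;\Delta,\alpha:\rho\vdash c\Rightarrow\Gamma;\Delta\vdash\mu\alpha{:}\rho.c:\rho$; (passivate) $\Gamma;\Delta\vdash t:\rho$, $\alpha:\rho\in\Delta$ $\Rightarrow \Gamma;\Delta\vdash[\alpha]t$. Numerals $\underline{n}:=\mathsf{S}^n0$. Structural substitution $t[\alpha:=\beta E]$ for a context $E ::= \Box \mid E\,t \mid \mathsf{S}\,E \mid \mathsf{nrec}\ r\ s\ E$ is homomorphic (capture-avoiding) except $([\alpha]u)[\alpha:=\beta E]:=[\beta]E[u[\alpha:=\beta E]]$. Reduction of $\lambda\mu\mathrm{T}$ is the compatible closure of: $(\lambda x.t)r\to t[x:=r]$; $\mathsf{S}(\mu\alpha.c)\to\mu\alpha.c[\alpha:=\alpha(\mathsf{S}\,\Box)]$; $(\mu\alpha.c)s\to\mu\alpha.c[\alpha:=\alpha(\Box\,s)]$; $\mu\alpha.[\alpha]t\to t$ if $\alpha\notin FCV(t)$; $[\alpha]\mu\beta.c\to c[\beta:=\alpha\,\Box]$; $\mathsf{nrec}\ r\ s\ 0\to r$; $\mathsf{nrec}\ r\ s\ (\mathsf{S}\,\underline{n})\to s\ \underline{n}\ (\mathsf{nrec}\ r\ s\ \underline{n})$; $\mathsf{nrec}\ r\ s\ (\mu\alpha.c)\to\mu\alpha.c[\alpha:=\alpha(\mathsf{nrec}\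 r\ s\ \Box)]$; conversion $=$ is its equivalence closure. Gödel's T ($\lambda\mathrm{T}$) is the $\mu$-free fragment with typing rules (var),(lambda),(app),(zero),(suc),(nrec) (no $\Delta$) and reduction the compatible closure of $(\lambda x.t)r\to t[x:=r]$, $\mathsf{nrec}\ r\ s\ 0\to r$, $\mathsf{nrec}\ r\ s\ (\mathsf{S}\,t)\to s\ t\ (\mathsf{nrec}\ r\ s\ t)$, with conversion $=$ its equivalence closure. A function $f:\mathbb{N}^n\to\mathbb{N}$ is representable in a system if there is a closed term $t$ of type $\mathbb{N}^n\to\mathbb{N}$ (i.e. $\mathbb{N}\to\dots\to\mathbb{N}\to\mathbb{N}$) with $t\,\underline{m_1}\cdots\underline{m_n}=\underline{f(m_1,\dots,m_n)}$ for all $m_1,\dots,m_n\in\mathbb{N}$. *)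

theory Defs
  imports Main
begin

text \<open>Terms use de Bruijn indices: lambda-variables and mu-variables are two separate
  index spaces. Terms are Church-style (binders and nrec carry type annotations).\<close>

datatype ty = Nat | Arr ty ty

fun cod :: "ty \<Rightarrow> ty" where
  "cod (Arr a b) = b"
| "cod Nat = Nat"

datatype trm =
    LVar nat
  | LLam ty trm
  | LApp trm trm
  | LMu ty cmd
  | LZero
  | LSuc trm
  | LNrec ty trm trm trm
and cmd = LPass nat trm

primrec liftl :: "nat \<Rightarrow> trm \<Rightarrow> trm" and liftlc :: "nat \<Rightarrow> cmd \<Rightarrow> cmd" where
  "liftl k (LVar i) = LVar (if i < k then i else Suc i)"
| "liftl k (LLam \<rho> t) = LLam \<rho> (liftl (Suc k) t)"
| "liftl k (LApp t s) = LApp (liftl k t) (liftl k s)"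
| "liftl k (LMu \<rho> c) = LMu \<rho> (liftlc k c)"
| "liftl k LZero = LZero"
| "liftl k (LSuc t) = LSuc (liftl k t)"
| "liftl k (LNrec \<rho> r s t) = LNrec \<rho> (liftl k r) (liftl k s) (liftl k t)"
| "liftlc k (LPass i t) = LPass i (liftl k t)"

primrec liftm :: "nat \<Rightarrow> trm \<Rightarrow> trm" and liftmc :: "nat \<Rightarrow> cmd \<Rightarrow> cmd" where
  "liftm k (LVar i) = LVar i"
| "liftm k (LLam \<rho> t) = LLam \<rho> (liftm k t)"
| "liftm k (LApp t s) = LApp (liftm k t) (liftm k s)"
| "liftm k (LMu \<rho> c) = LMu \<rho> (liftmc (Suc k) c)"
| "liftm k LZero = LZero"
| "liftm k (LSuc t) = LSuc (liftm k t)"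
| "liftm k (LNrec \<rho> r s t) = LNrec \<rho> (liftm k r) (liftm k s) (liftm k t)"
| "liftmc k (LPass i t) = LPass (if i < k then i else Suc i) (liftm k t)"

text \<open>Lowering of free mu-variables with index > k (used when mu-variable k has vanished)\<close>
primrec lowerm :: "nat \<Rightarrow> trm \<Rightarrow> trm" and lowermc :: "nat \<Rightarrow> cmd \<Rightarrow> cmd" where
  "lowerm k (LVar i) = LVar i"
| "lowerm k (LLam \<rho> t) = LLam \<rho> (lowerm k t)"
| "lowerm k (LApp t s) = LApp (lowerm k t) (lowerm k s)"
| "lowerm k (LMu \<rho> c) = LMu \<rho> (lowermc (Suc k) c)"
| "lowerm k LZero = LZero"
| "lowerm k (LSuc t) = LSuc (lowerm k t)"
| "lowerm k (LNrec \<rho> r s t) = LNrec \<rho> (lowerm k r) (lowerm k s) (lowerm k t)"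
| "lowermc k (LPass i t) = LPass (if k < i then i - 1 else i) (lowerm k t)"

primrec mfree :: "nat \<Rightarrow> trm \<Rightarrow> bool" and mfreec :: "nat \<Rightarrow> cmd \<Rightarrow> bool" where
  "mfree k (LVar i) = False"
| "mfree k (LLam \<rho> t) = mfree k t"
| "mfree k (LApp t s) = (mfree k t \<or> mfree k s)"
| "mfree k (LMu \<rho> c) = mfreec (Suc k) c"
| "mfree k LZero = False"
| "mfree k (LSuc t) = mfree k t"
| "mfree k (LNrec \<rho> r s t) = (mfree k r \<or> mfree k s \<or> mfree k t)"
| "mfreec k (LPass i t) = (i = k \<or> mfree k t)"

primrec substl :: "nat \<Rightarrow> trm \<Rightarrow> trm \<Rightarrow> trm" and substlc :: "nat \<Rightarrow> trm \<Rightarrow> cmd \<Rightarrow> cmd" where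
  "substl k s (LVar i) = (if i = k then s else if k < i then LVar (i - 1) else LVar i)"
| "substl k s (LLam \<rho> t) = LLam \<rho> (substl (Suc k) (liftl 0 s) t)"
| "substl k s (LApp t u) = LApp (substl k s t) (substl k s u)"
| "substl k s (LMu \<rho> c) = LMu \<rho> (substlc k (liftm 0 s) c)"
| "substl k s LZero = LZero"
| "substl k s (LSuc t) = LSuc (substl k s t)"
| "substl k s (LNrec \<rho> r u t) = LNrec \<rho> (substl k s r) (substl k s u) (substl k s t)"
| "substlc k s (LPass i t) = LPass i (substl k s t)"

datatype ctx = Hole | CApp ctx trm | CSuc ctx | CNrec ty trm trm ctx

primrec plug :: "ctx \<Rightarrow> trm \<Rightarrow> trm" where
  "plug Hole u = u"
| "plug (CApp E t) u = LApp (plug E u) t"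
| "plug (CSuc E) u = LSuc (plug E u)"
| "plug (CNrec \<rho> r s E) u = LNrec \<rho> r s (plug E u)"

primrec ctx_liftl :: "nat \<Rightarrow> ctx \<Rightarrow> ctx" where
  "ctx_liftl k Hole = Hole"
| "ctx_liftl k (CApp E t) = CApp (ctx_liftl k E) (liftl k t)"
| "ctx_liftl k (CSuc E) = CSuc (ctx_liftl k E)"
| "ctx_liftl k (CNrec \<rho> r s E) = CNrec \<rho> (liftl k r) (liftl k s) (ctx_liftl k E)"

primrec ctx_liftm :: "nat \<Rightarrow> ctx \<Rightarrow> ctx" where
  "ctx_liftm k Hole = Hole"
| "ctx_liftm k (CApp E t) = CApp (ctx_liftm k E) (liftm k t)"
| "ctx_liftm k (CSuc E) = CSuc (ctx_liftm k E)"
| "ctx_liftm k (CNrec \<rho> r s E) = CNrec \<rho> (liftm k r) (liftm k s) (ctx_liftm k E)"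

text \<open>Structural substitution t[alpha_k := beta_j E]: homomorphic except
  ([k]u)[k := j E] = [j] E[u[k := j E]]; no renumbering of other mu-variables.\<close>
primrec mstruct :: "nat \<Rightarrow> nat \<Rightarrow> ctx \<Rightarrow> trm \<Rightarrow> trm"
  and mstructc :: "nat \<Rightarrow> nat \<Rightarrow> ctx \<Rightarrow> cmd \<Rightarrow> cmd" where
  "mstruct k j E (LVar i) = LVar i"
| "mstruct k j E (LLam \<rho> t) = LLam \<rho> (mstruct k j (ctx_liftl 0 E) t)"
| "mstruct k j E (LApp t s) = LApp (mstruct k j E t) (mstruct k j E s)"
| "mstruct k j E (LMu \<rho> c) = LMu \<rho> (mstructc (Suc k) (Suc j) (ctx_liftm 0 E) c)"
| "mstruct k j E LZero = LZero"
| "mstruct k j E (LSuc t) = LSuc (mstruct k j E t)"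
| "mstruct k j E (LNrec \<rho> r s t) =
     LNrec \<rho> (mstruct k j E r) (mstruct k j E s) (mstruct k j E t)"
| "mstructc k j E (LPass i t) =
     (if i = k then LPass j (plug E (mstruct k j E t)) else LPass i (mstruct k j E t))"

primrec numl :: "nat \<Rightarrow> trm" where
  "numl 0 = LZero"
| "numl (Suc n) = LSuc (numl n)"

text \<open>Typing: Gamma (lambda-variables) and Delta (mu-variables) are lists indexed by de Bruijn index.\<close>
inductive typl :: "ty list \<Rightarrow> ty list \<Rightarrow> trm \<Rightarrow> ty \<Rightarrow> bool"
  and typlc :: "ty list \<Rightarrow> ty list \<Rightarrow> cmd \<Rightarrow> bool" where
  var: "i < length \<Gamma> \<Longrightarrow> \<Gamma> ! i = \<rho> \<Longrightarrow> typl \<Gamma> \<Delta> (LVar i) \<rho>"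
| lam: "typl (\<sigma> # \<Gamma>) \<Delta> t \<tau> \<Longrightarrow> typl \<Gamma> \<Delta> (LLam \<sigma> t) (Arr \<sigma> \<tau>)"
| app: "typl \<Gamma> \<Delta> t (Arr \<sigma> \<tau>) \<Longrightarrow> typl \<Gamma> \<Delta> s \<sigma> \<Longrightarrow> typl \<Gamma> \<Delta> (LApp t s) \<tau>"
| zero: "typl \<Gamma> \<Delta> LZero Nat"
| suc: "typl \<Gamma> \<Delta> t Nat \<Longrightarrow> typl \<Gamma> \<Delta> (LSuc t) Nat"
| nrec: "typl \<Gamma> \<Delta> r \<rho> \<Longrightarrow> typl \<Gamma> \<Delta> s (Arr Nat (Arr \<rho> \<rho>)) \<Longrightarrow> typl \<Gamma> \<Delta> t Nat
         \<Longrightarrow> typl \<Gamma> \<Delta> (LNrec \<rho> r s t) \<rho>"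
| activate: "typlc \<Gamma> (\<rho> # \<Delta>) c \<Longrightarrow> typl \<Gamma> \<Delta> (LMu \<rho> c) \<rho>"
| passivate: "typl \<Gamma> \<Delta> t \<rho> \<Longrightarrow> i < length \<Delta> \<Longrightarrow> \<Delta> ! i = \<rho> \<Longrightarrow> typlc \<Gamma> \<Delta> (LPass i t)"

inductive stepl :: "trm \<Rightarrow> trm \<Rightarrow> bool" and steplc :: "cmd \<Rightarrow> cmd \<Rightarrow> bool" where
  beta: "stepl (LApp (LLam \<rho> t) r) (substl 0 r t)"
| suc_mu: "stepl (LSuc (LMu \<rho> c)) (LMu \<rho> (mstructc 0 0 (CSuc Hole) c))"
| app_mu: "stepl (LApp (LMu \<rho> c) s) (LMu (cod \<rho>) (mstructc 0 0 (CApp Hole (liftm 0 s)) c))"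
| mu_eta: "\<not> mfree 0 t \<Longrightarrow> stepl (LMu \<rho> (LPass 0 t)) (lowerm 0 t)"
| pass_mu: "steplc (LPass a (LMu \<rho> c)) (lowermc 0 (mstructc 0 (Suc a) Hole c))"
| nrec_zero: "stepl (LNrec \<rho> r s LZero) r"
| nrec_suc: "stepl (LNrec \<rho> r s (LSuc (numl n))) (LApp (LApp s (numl n)) (LNrec \<rho> r s (numl n)))"
| nrec_mu: "stepl (LNrec \<rho> r s (LMu \<sigma> c))
     (LMu \<rho> (mstructc 0 0 (CNrec \<rho> (liftm 0 r) (liftm 0 s) Hole) c))"
| c_lam: "stepl t t' \<Longrightarrow> stepl (LLam \<rho> t) (LLam \<rho> t')"
| c_appl: "stepl t t' \<Longrightarrow> stepl (LApp t s) (LApp t' s)"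
| c_appr: "stepl s s' \<Longrightarrow> stepl (LApp t s) (LApp t s')"
| c_mu: "steplc c c' \<Longrightarrow> stepl (LMu \<rho> c) (LMu \<rho> c')"
| c_suc: "stepl t t' \<Longrightarrow> stepl (LSuc t) (LSuc t')"
| c_nrec1: "stepl r r' \<Longrightarrow> stepl (LNrec \<rho> r s t) (LNrec \<rho> r' s t)"
| c_nrec2: "stepl s s' \<Longrightarrow> stepl (LNrec \<rho> r s t) (LNrec \<rho> r s' t)"
| c_nrec3: "stepl t t' \<Longrightarrow> stepl (LNrec \<rho> r s t) (LNrec \<rho> r s t')"
| c_pass: "stepl t t' \<Longrightarrow> steplc (LPass i t) (LPass i t')"

definition convl :: "trm \<Rightarrow> trm \<Rightarrow> bool" where
  "convl = equivclp stepl"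

datatype tm =
    TVar nat
  | TLam ty tm
  | TApp tm tm
  | TZero
  | TSuc tm
  | TNrec ty tm tm tm

primrec liftT :: "nat \<Rightarrow> tm \<Rightarrow> tm" where
  "liftT k (TVar i) = TVar (if i < k then i else Suc i)"
| "liftT k (TLam \<rho> t) = TLam \<rho> (liftT (Suc k) t)"
| "liftT k (TApp t s) = TApp (liftT k t) (liftT k s)"
| "liftT k TZero = TZero"
| "liftT k (TSuc t) = TSuc (liftT k t)"
| "liftT k (TNrec \<rho> r s t) = TNrec \<rho> (liftT k r) (liftT k s) (liftT k t)"

primrec substT :: "nat \<Rightarrow> tm \<Rightarrow> tm \<Rightarrow> tm" where
  "substT k s (TVar i) = (if i = k then s else if k < i then TVar (i - 1) else TVar i)"
| "substT k s (TLam \<rho> t) = TLam \<rho> (substT (Suc k) (liftT 0 s) t)"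
| "substT k s (TApp t u) = TApp (substT k s t) (substT k s u)"
| "substT k s TZero = TZero"
| "substT k s (TSuc t) = TSuc (substT k s t)"
| "substT k s (TNrec \<rho> r u t) = TNrec \<rho> (substT k s r) (substT k s u) (substT k s t)"

primrec numT :: "nat \<Rightarrow> tm" where
  "numT 0 = TZero"
| "numT (Suc n) = TSuc (numT n)"

inductive typT :: "ty list \<Rightarrow> tm \<Rightarrow> ty \<Rightarrow> bool" where
  var: "i < length \<Gamma> \<Longrightarrow> \<Gamma> ! i = \<rho> \<Longrightarrow> typT \<Gamma> (TVar i) \<rho>"
| lam: "typT (\<sigma> # \<Gamma>) t \<tau> \<Longrightarrow> typT \<Gamma> (TLam \<sigma> t) (Arr \<sigma> \<tau>)"
| app: "typT \<Gamma> t (Arr \<sigma> \<tau>) \<Longrightarrow> typT \<Gamma> s \<sigma> \<Longrightarrow> typT \<Gamma> (TApp t s) \<tau>"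
| zero: "typT \<Gamma> TZero Nat"
| suc: "typT \<Gamma> t Nat \<Longrightarrow> typT \<Gamma> (TSuc t) Nat"
| nrec: "typT \<Gamma> r \<rho> \<Longrightarrow> typT \<Gamma> s (Arr Nat (Arr \<rho> \<rho>)) \<Longrightarrow> typT \<Gamma> t Nat
         \<Longrightarrow> typT \<Gamma> (TNrec \<rho> r s t) \<rho>"

inductive stepT :: "tm \<Rightarrow> tm \<Rightarrow> bool" where
  beta: "stepT (TApp (TLam \<rho> t) r) (substT 0 r t)"
| nrec_zero: "stepT (TNrec \<rho> r s TZero) r"
| nrec_suc: "stepT (TNrec \<rho> r s (TSuc t)) (TApp (TApp s t) (TNrec \<rho> r s t))"
| c_lam: "stepT t t' \<Longrightarrow> stepT (TLam \<rho> t) (TLam \<rho> t')"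
| c_appl: "stepT t t' \<Longrightarrow> stepT (TApp t s) (TApp t' s)"
| c_appr: "stepT s s' \<Longrightarrow> stepT (TApp t s) (TApp t s')"
| c_suc: "stepT t t' \<Longrightarrow> stepT (TSuc t) (TSuc t')"
| c_nrec1: "stepT r r' \<Longrightarrow> stepT (TNrec \<rho> r s t) (TNrec \<rho> r' s t)"
| c_nrec2: "stepT s s' \<Longrightarrow> stepT (TNrec \<rho> r s t) (TNrec \<rho> r s' t)"
| c_nrec3: "stepT t t' \<Longrightarrow> stepT (TNrec \<rho> r s t) (TNrec \<rho> r s t')"

definition convT :: "tm \<Rightarrow> tm \<Rightarrow> bool" where
  "convT = equivclp stepT"

primrec natArr :: "nat \<Rightarrow> ty" where
  "natArr 0 = Nat"
| "natArr (Suc n) = Arr Nat (natArr n)"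

definition representable_lmT :: "nat \<Rightarrow> (nat list \<Rightarrow> nat) \<Rightarrow> bool" where
  "representable_lmT n f \<longleftrightarrow> (\<exists>t. typl [] [] t (natArr n) \<and>
     (\<forall>ms. length ms = n \<longrightarrow> convl (foldl LApp t (map numl ms)) (numl (f ms))))"

definition representable_T :: "nat \<Rightarrow> (nat list \<Rightarrow> nat) \<Rightarrow> bool" where
  "representable_T n f \<longleftrightarrow> (\<exists>t. typT [] t (natArr n) \<and>
     (\<forall>ms. length ms = n \<longrightarrow> convT (foldl TApp t (map numT ms)) (numT (f ms))))"

end

theory Submission
  imports Defs "HOL-Library.Confluence"
begin

text \<open>
  The proof uses a continuation-passing (double-negation) translation of lambda-mu-T into T
  with answer type \<open>Nat\<close>.  A term \<open>t\<close> is translated relative to an environment \<open>L\<close> for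
  its lambda-variables (bound to suspended computations), an environment \<open>M\<close> for its
  mu-variables (bound to continuations) and a current continuation \<open>\<kappa>\<close>; the result is a
  T-term of type \<open>Nat\<close>.

  Conversions are proved for the erased translation because the typed one depends on type
  information that is not stable under substitution.
\<close>

lemma liftT_liftT:
  "i \<le> k \<Longrightarrow> liftT (Suc k) (liftT i t) = liftT i (liftT k t)"
  by (induct t arbitrary: i k) auto

lemma liftT_substT:
  "j \<le> i \<Longrightarrow> liftT i (substT j s t) = substT j (liftT i s) (liftT (Suc i) t)"
  by (induct t arbitrary: i j s) (simp_all add: diff_Suc liftT_liftT split: nat.split)

lemma liftT_substT_le:
  "i \<le> j \<Longrightarrow> liftT i (substT j s t) = substT (Suc j) (liftT i s) (liftT i t)"
  by (induct t arbitrary: i j s) (auto simp: liftT_liftT)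

lemma substT_liftT [simp]: "substT k s (liftT k t) = t"
  by (induct t arbitrary: k s) simp_all

text \<open>The substitution lemma: it makes beta-reduction stable under substitution.\<close>
lemma substT_substT:
  "i \<le> j \<Longrightarrow> substT i (substT j v u) (substT (Suc j) (liftT i v) t) = substT j v (substT i u t)"
  by (induct t arbitrary: i j u v)
    (simp_all add: diff_Suc liftT_liftT [symmetric] liftT_substT_le split: nat.split)

lemma substT_Var_liftT [simp]: "substT k (TVar k) (liftT (Suc k) t) = t"
  by (induct t arbitrary: k) auto

lemma liftT_numT [simp]: "liftT k (numT n) = numT n"
  by (induct n) auto

lemma substT_numT [simp]: "substT k u (numT n) = numT n"
  by (induct n) auto

lemma stepT_liftT: "stepT a b \<Longrightarrow> stepT (liftT k a) (liftT k b)"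
proof (induct a b arbitrary: k rule: stepT.induct)
  case (beta \<rho> t r)
  then show ?case
    using stepT.beta[of \<rho> "liftT (Suc k) t" "liftT k r"] by (simp add: liftT_substT)
qed (auto intro: stepT.intros)

lemma rtranclp_map:
  assumes "\<And>a b. R a b \<Longrightarrow> S (f a) (f b)" and "R\<^sup>*\<^sup>* a b"
  shows "S\<^sup>*\<^sup>* (f a) (f b)"
  using assms(2) by induct (auto intro: rtranclp.rtrancl_into_rtrancl assms(1))

lemma equivclp_map:
  assumes "\<And>a b. R a b \<Longrightarrow> S (f a) (f b)" and "equivclp R a b"
  shows "equivclp S (f a) (f b)"
  using assms(2)
proof (induct rule: equivclp_induct)
  case (step y z)
  then show ?case by (meson assms(1) equivclp_into_equivclp)
qed simp

lemma convT_refl [simp]: "convT a a"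
  by (simp add: convT_def)

lemma convT_sym: "convT a b \<Longrightarrow> convT b a"
  by (simp add: convT_def equivclp_sym)

lemma convT_trans [trans]: "convT a b \<Longrightarrow> convT b c \<Longrightarrow> convT a c"
  unfolding convT_def by (rule equivclp_trans)

lemma stepT_convT: "stepT a b \<Longrightarrow> convT a b"
  by (auto simp: convT_def)

lemma stepsT_convT: "stepT\<^sup>*\<^sup>* a b \<Longrightarrow> convT a b"
  by (simp add: convT_def rtranclp_into_equivclp)

lemma convT_map: "(\<And>a b. stepT a b \<Longrightarrow> stepT (f a) (f b)) \<Longrightarrow> convT a b \<Longrightarrow> convT (f a) (f b)"
  unfolding convT_def by (rule equivclp_map)

lemma convT_liftT: "convT a b \<Longrightarrow> convT (liftT k a) (liftT k b)"
  by (rule convT_map[OF stepT_liftT])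

lemma convT_Lam: "convT a b \<Longrightarrow> convT (TLam \<rho> a) (TLam \<rho> b)"
  by (rule convT_map[OF stepT.c_lam])

lemma convT_Suc: "convT a b \<Longrightarrow> convT (TSuc a) (TSuc b)"
  by (rule convT_map[OF stepT.c_suc])

lemma convT_App: "convT a b \<Longrightarrow> convT c d \<Longrightarrow> convT (TApp a c) (TApp b d)"
  using convT_map[of "\<lambda>x. TApp x c", OF stepT.c_appl] convT_map[of "TApp b", OF stepT.c_appr]
  by (blast intro: convT_trans)

lemma convT_Nrec:
  "convT a b \<Longrightarrow> convT c d \<Longrightarrow> convT e g \<Longrightarrow> convT (TNrec \<rho> a c e) (TNrec \<rho> b d g)"
  using convT_map[of "\<lambda>x. TNrec \<rho> x c e", OF stepT.c_nrec1]
    convT_map[of "\<lambda>x. TNrec \<rho> b x e", OF stepT.c_nrec2] convT_map[of "TNrec \<rho> b d", OF stepT.c_nrec3]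
  by (blast intro: convT_trans)

lemma convT_beta: "convT (TApp (TLam \<rho> t) r) (substT 0 r t)"
  by (rule stepT_convT, rule stepT.beta)

text \<open>Head reductions, possibly under one to three applications, may be performed on the
  left of a conversion; used as rewrite rules they evaluate concrete CPS terms.\<close>
lemma convT_beta_iff: "convT (TApp (TLam \<rho> t) r) X \<longleftrightarrow> convT (substT 0 r t) X"
  by (meson convT_beta convT_sym convT_trans)

lemma convT_beta_iff1:
  "convT (TApp (TApp (TLam \<rho> t) r) u) X \<longleftrightarrow> convT (TApp (substT 0 r t) u) X"
  by (meson convT_beta convT_App convT_refl convT_sym convT_trans)

lemma convT_beta_iff2:
  "convT (TApp (TApp (TApp (TLam \<rho> t) r) u) v) X \<longleftrightarrow> convT (TApp (TApp (substT 0 r t) u) v) X"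
  by (meson convT_beta convT_App convT_refl convT_sym convT_trans)

lemma convT_nrec_zero_iff: "convT (TApp (TNrec \<rho> r s TZero) u) X \<longleftrightarrow> convT (TApp r u) X"
  by (meson stepT.nrec_zero stepT_convT convT_App convT_refl convT_sym convT_trans)

lemma convT_nrec_suc_iff:
  "convT (TApp (TNrec \<rho> r s (TSuc t)) u) X \<longleftrightarrow> convT (TApp (TApp (TApp s t) (TNrec \<rho> r s t)) u) X"
  by (meson stepT.nrec_suc stepT_convT convT_App convT_refl convT_sym convT_trans)

lemmas convT_head =
  convT_beta_iff convT_beta_iff1 convT_beta_iff2 convT_nrec_zero_iff convT_nrec_suc_iff

lemma convT_foldl: "convT a b \<Longrightarrow> convT (foldl TApp a xs) (foldl TApp b xs)"
  by (induct xs arbitrary: a b) (simp_all add: convT_App)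

section \<open>Church-Rosser for T\<close>

inductive pstep :: "tm \<Rightarrow> tm \<Rightarrow> bool" where
  p_var: "pstep (TVar i) (TVar i)"
| p_lam: "pstep t t' \<Longrightarrow> pstep (TLam \<rho> t) (TLam \<rho> t')"
| p_app: "pstep t t' \<Longrightarrow> pstep r r' \<Longrightarrow> pstep (TApp t r) (TApp t' r')"
| p_zero: "pstep TZero TZero"
| p_suc: "pstep t t' \<Longrightarrow> pstep (TSuc t) (TSuc t')"
| p_nrec: "pstep r r' \<Longrightarrow> pstep s s' \<Longrightarrow> pstep t t' \<Longrightarrow> pstep (TNrec \<rho> r s t) (TNrec \<rho> r' s' t')"
| p_beta: "pstep t t' \<Longrightarrow> pstep r r' \<Longrightarrow> pstep (TApp (TLam \<rho> t) r) (substT 0 r' t')"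
| p_nrec_zero: "pstep r r' \<Longrightarrow> pstep (TNrec \<rho> r s TZero) r'"
| p_nrec_suc: "pstep r r' \<Longrightarrow> pstep s s' \<Longrightarrow> pstep t t' \<Longrightarrow>
    pstep (TNrec \<rho> r s (TSuc t)) (TApp (TApp s' t') (TNrec \<rho> r' s' t'))"

lemma pstep_refl [simp, intro]: "pstep t t"
  by (induct t) (auto intro: pstep.intros)

lemma pstep_liftT: "pstep t t' \<Longrightarrow> pstep (liftT k t) (liftT k t')"
proof (induct t t' arbitrary: k rule: pstep.induct)
  case (p_beta t t' r r' \<rho>)
  then show ?case
    using pstep.p_beta[of "liftT (Suc k) t" "liftT (Suc k) t'" "liftT k r" "liftT k r'" \<rho>]
    by (simp add: liftT_substT)
qed (auto intro: pstep.intros)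

lemma pstep_substT: "pstep t t' \<Longrightarrow> pstep u u' \<Longrightarrow> pstep (substT k u t) (substT k u' t')"
proof (induct t t' arbitrary: k u u' rule: pstep.induct)
  case (p_lam t t' \<rho>)
  then show ?case using pstep_liftT by (auto intro!: pstep.p_lam)
next
  case (p_beta t t' r r' \<rho>)
  have "pstep (TApp (TLam \<rho> (substT (Suc k) (liftT 0 u) t)) (substT k u r))
           (substT 0 (substT k u' r') (substT (Suc k) (liftT 0 u') t'))"
    using p_beta by (auto intro!: pstep.p_beta pstep_liftT)
  then show ?case by (simp add: substT_substT [symmetric])
qed (auto intro: pstep.intros)

fun cdev :: "tm \<Rightarrow> tm" where
  "cdev (TVar i) = TVar i"
| "cdev (TLam \<rho> t) = TLam \<rho> (cdev t)"
| "cdev (TApp (TLam \<rho> t) r) = substT 0 (cdev r) (cdev t)"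
| "cdev (TApp t r) = TApp (cdev t) (cdev r)"
| "cdev TZero = TZero"
| "cdev (TSuc t) = TSuc (cdev t)"
| "cdev (TNrec \<rho> r s TZero) = cdev r"
| "cdev (TNrec \<rho> r s (TSuc t)) = TApp (TApp (cdev s) (cdev t)) (TNrec \<rho> (cdev r) (cdev s) (cdev t))"
| "cdev (TNrec \<rho> r s t) = TNrec \<rho> (cdev r) (cdev s) (cdev t)"

inductive_cases pstep_LamE: "pstep (TLam \<rho> t) u"
inductive_cases pstep_SucE: "pstep (TSuc t) u"
inductive_cases pstep_ZeroE: "pstep TZero u"

lemma pstep_cdev: "pstep t u \<Longrightarrow> pstep u (cdev t)"
proof (induct t u rule: pstep.induct)
  case (p_app t t' r r')
  show ?case
  proof (cases t)
    case (TLam \<rho> b)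
    with p_app obtain b' where "t' = TLam \<rho> b'" "pstep b b'" "pstep b' (cdev b)"
      by (auto elim: pstep_LamE)
    then show ?thesis using p_app TLam by (auto intro: pstep.intros)
  qed (use p_app in \<open>auto intro: pstep.intros\<close>)
next
  case (p_nrec r r' s s' t t' \<rho>)
  show ?case
  proof (cases t)
    case TZero
    with p_nrec have "t' = TZero" by (auto elim: pstep_ZeroE)
    then show ?thesis using p_nrec TZero by (auto intro: pstep.intros)
  next
    case (TSuc a)
    with p_nrec obtain a' where "t' = TSuc a'" "pstep a a'" "pstep a' (cdev a)"
      by (auto elim: pstep_SucE)
    then show ?thesis using p_nrec TSuc by (auto intro: pstep.intros)
  qed (use p_nrec in \<open>auto intro: pstep.intros\<close>)
next
  case (p_beta t t' r r' \<rho>)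
  then show ?case by (auto intro: pstep_substT)
qed (auto intro: pstep.intros)

text \<open>By the triangle property, parallel reduction has the diamond property.\<close>
lemma strong_confluentp_pstep: "strong_confluentp pstep"
  by (rule strong_confluentpI) (meson pstep_cdev r_into_rtranclp sup2CI)

lemma stepsT_Lam: "stepT\<^sup>*\<^sup>* a b \<Longrightarrow> stepT\<^sup>*\<^sup>* (TLam \<rho> a) (TLam \<rho> b)"
  by (rule rtranclp_map[of stepT stepT "TLam \<rho>", OF stepT.c_lam])

lemma stepsT_Suc: "stepT\<^sup>*\<^sup>* a b \<Longrightarrow> stepT\<^sup>*\<^sup>* (TSuc a) (TSuc b)"
  by (rule rtranclp_map[of stepT stepT TSuc, OF stepT.c_suc])

lemma stepsT_App: "stepT\<^sup>*\<^sup>* a b \<Longrightarrow> stepT\<^sup>*\<^sup>* c d \<Longrightarrow> stepT\<^sup>*\<^sup>* (TApp a c) (TApp b d)"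
  using rtranclp_map[of stepT stepT "\<lambda>x. TApp x c", OF stepT.c_appl]
    rtranclp_map[of stepT stepT "TApp b", OF stepT.c_appr]
  by (meson rtranclp_trans)

lemma stepsT_Nrec: "stepT\<^sup>*\<^sup>* a b \<Longrightarrow> stepT\<^sup>*\<^sup>* c d \<Longrightarrow> stepT\<^sup>*\<^sup>* e g \<Longrightarrow>
   stepT\<^sup>*\<^sup>* (TNrec \<rho> a c e) (TNrec \<rho> b d g)"
  using rtranclp_map[of stepT stepT "\<lambda>x. TNrec \<rho> x c e", OF stepT.c_nrec1]
    rtranclp_map[of stepT stepT "\<lambda>x. TNrec \<rho> b x e", OF stepT.c_nrec2]
    rtranclp_map[of stepT stepT "TNrec \<rho> b d", OF stepT.c_nrec3]
  by (meson rtranclp_trans)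

lemma pstep_stepsT: "pstep a b \<Longrightarrow> stepT\<^sup>*\<^sup>* a b"
proof (induct rule: pstep.induct)
  case (p_beta t t' r r' \<rho>)
  have "stepT\<^sup>*\<^sup>* (TApp (TLam \<rho> t) r) (TApp (TLam \<rho> t') r')"
    using p_beta by (auto intro: stepsT_App stepsT_Lam)
  also have "stepT (TApp (TLam \<rho> t') r') (substT 0 r' t')" by (rule stepT.beta)
  finally show ?case .
next
  case (p_nrec_zero r r' \<rho> s)
  have "stepT (TNrec \<rho> r s TZero) r" by (rule stepT.nrec_zero)
  then show ?case using p_nrec_zero by auto
next
  case (p_nrec_suc r r' s s' t t' \<rho>)
  have "stepT (TNrec \<rho> r s (TSuc t)) (TApp (TApp s t) (TNrec \<rho> r s t))" by (rule stepT.nrec_suc)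
  also have "stepT\<^sup>*\<^sup>* \<dots> (TApp (TApp s' t') (TNrec \<rho> r' s' t'))"
    using p_nrec_suc by (auto intro: stepsT_App stepsT_Nrec)
  finally show ?case .
qed (auto intro: stepsT_App stepsT_Lam stepsT_Suc stepsT_Nrec)

text \<open>Reduction and parallel reduction have the same reflexive-transitive closure, so
  confluence transfers from one to the other.\<close>
lemma rtranclp_pstep_eq: "pstep\<^sup>*\<^sup>* = stepT\<^sup>*\<^sup>*"
proof (rule rtranclp_subset)
  show "stepT \<le> pstep"
  proof
    fix x y assume "stepT x y" then show "pstep x y"
      by induct (auto intro: pstep.intros)
  qed
  show "pstep \<le> stepT\<^sup>*\<^sup>*"
    using pstep_stepsT by blast
qed

lemma confluentp_stepT: "confluentp stepT"
  using strong_confluentp_imp_confluentp[OF strong_confluentp_pstep]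
  unfolding confluentp_def rtranclp_conversep rtranclp_pstep_eq .

lemma convT_church_rosser: "convT a b \<Longrightarrow> \<exists>d. stepT\<^sup>*\<^sup>* a d \<and> stepT\<^sup>*\<^sup>* b d"
  using semiconfluentp_equivclp[OF confluentp_imp_semiconfluentp[OF confluentp_stepT]]
  unfolding convT_def rtranclp_conversep by auto

lemma numT_normal: "\<not> stepT (numT n) x"
  by (induct n arbitrary: x) (auto elim: stepT.cases)

lemma convT_numT_stepsT: "convT a (numT n) \<Longrightarrow> stepT\<^sup>*\<^sup>* a (numT n)"
proof -
  assume "convT a (numT n)"
  then obtain d where "stepT\<^sup>*\<^sup>* a d" "stepT\<^sup>*\<^sup>* (numT n) d"
    using convT_church_rosser by blast
  moreover from this(2) have "d = numT n"
    by (induct rule: rtranclp_induct) (auto simp: numT_normal)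
  ultimately show ?thesis by simp
qed

section \<open>Type erasure in T\<close>

text \<open>Erasure replaces every type annotation by \<open>Nat\<close>.  Reduction in T ignores annotations,
  so reductions of an erased term lift to the original term.\<close>
primrec eraseT :: "tm \<Rightarrow> tm" where
  "eraseT (TVar i) = TVar i"
| "eraseT (TLam \<rho> t) = TLam Nat (eraseT t)"
| "eraseT (TApp t s) = TApp (eraseT t) (eraseT s)"
| "eraseT TZero = TZero"
| "eraseT (TSuc t) = TSuc (eraseT t)"
| "eraseT (TNrec \<rho> r s t) = TNrec Nat (eraseT r) (eraseT s) (eraseT t)"

lemma eraseT_liftT [simp]: "eraseT (liftT k t) = liftT k (eraseT t)"
  by (induct t arbitrary: k) auto

lemma eraseT_substT [simp]: "eraseT (substT k u t) = substT k (eraseT u) (eraseT t)"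
  by (induct t arbitrary: k u) auto

lemma eraseT_numT [simp]: "eraseT (numT n) = numT n"
  by (induct n) auto

lemma eraseT_foldl: "eraseT (foldl TApp a xs) = foldl TApp (eraseT a) (map eraseT xs)"
  by (induct xs arbitrary: a) auto

lemma eraseT_eq_iff:
  "eraseT a = TVar i \<longleftrightarrow> a = TVar i"
  "eraseT a = TLam \<rho> x \<longleftrightarrow> (\<exists>\<sigma> a1. a = TLam \<sigma> a1 \<and> eraseT a1 = x \<and> \<rho> = Nat)"
  "eraseT a = TApp x y \<longleftrightarrow> (\<exists>a1 a2. a = TApp a1 a2 \<and> eraseT a1 = x \<and> eraseT a2 = y)"
  "eraseT a = TZero \<longleftrightarrow> a = TZero"
  "eraseT a = TSuc x \<longleftrightarrow> (\<exists>a1. a = TSuc a1 \<and> eraseT a1 = x)"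
  "eraseT a = TNrec \<rho> x y z \<longleftrightarrow>
     (\<exists>\<sigma> a1 a2 a3. a = TNrec \<sigma> a1 a2 a3 \<and> eraseT a1 = x \<and> eraseT a2 = y \<and> eraseT a3 = z \<and> \<rho> = Nat)"
  by (cases a; auto)+

lemma stepT_eraseT_lift: "stepT x b \<Longrightarrow> eraseT a = x \<Longrightarrow> \<exists>a'. stepT a a' \<and> eraseT a' = b"
proof (induct x b arbitrary: a rule: stepT.induct)
  case (beta \<rho> t r)
  then show ?case by (auto simp: eraseT_eq_iff intro: stepT.intros)
next
  case (nrec_zero \<rho> r s)
  then show ?case by (auto simp: eraseT_eq_iff intro: stepT.intros)
next
  case (nrec_suc \<rho> r s t)
  then show ?case by (auto simp: eraseT_eq_iff intro: stepT.intros)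
qed (fastforce simp: eraseT_eq_iff intro: stepT.intros)+

lemma stepsT_eraseT_lift: "stepT\<^sup>*\<^sup>* (eraseT a) b \<Longrightarrow> \<exists>a'. stepT\<^sup>*\<^sup>* a a' \<and> eraseT a' = b"
proof (induct rule: rtranclp_induct)
  case (step y z)
  then obtain a' where "stepT\<^sup>*\<^sup>* a a'" "eraseT a' = y"
    by blast
  moreover obtain a'' where "stepT a' a''" "eraseT a'' = z"
    using stepT_eraseT_lift[OF step(2) calculation(2)] by blast
  ultimately show ?case by (blast intro: rtranclp.rtrancl_into_rtrancl)
qed auto

lemma eraseT_eq_numT: "eraseT a = numT n \<Longrightarrow> a = numT n"
  by (induct n arbitrary: a) (auto simp: eraseT_eq_iff)

text \<open>Erasure reflects conversion to a numeral (this is where Church-Rosser is needed).\<close>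
lemma convT_eraseT_numT: "convT (eraseT a) (numT n) \<Longrightarrow> convT a (numT n)"
proof -
  assume "convT (eraseT a) (numT n)"
  then have "stepT\<^sup>*\<^sup>* (eraseT a) (numT n)" by (rule convT_numT_stepsT)
  then obtain a' where "stepT\<^sup>*\<^sup>* a a'" "eraseT a' = numT n"
    using stepsT_eraseT_lift by blast
  then show ?thesis using eraseT_eq_numT stepsT_convT by blast
qed

section \<open>The type-erased CPS translation\<close>

text \<open>From here on, nested lifts and substitutions into lifted terms are normalised
  automatically; this evaluates the binder bookkeeping of the translation.\<close>
declare liftT_liftT [simp]

lemma substT_Suc_liftT [simp]: "substT (Suc j) (liftT 0 u) (liftT 0 x) = liftT 0 (substT j u x)"
  by (simp add: liftT_substT_le)

text \<open>Environments map de Bruijn indices to T-terms; going under a T-binder lifts all of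
  them, and \<open>env_cons\<close> binds index 0.\<close>
abbreviation up :: "(nat \<Rightarrow> tm) \<Rightarrow> nat \<Rightarrow> tm" where
  "up L \<equiv> \<lambda>i. liftT 0 (L i)"

definition env_cons :: "tm \<Rightarrow> (nat \<Rightarrow> tm) \<Rightarrow> nat \<Rightarrow> tm" where
  "env_cons x L i = (case i of 0 \<Rightarrow> x | Suc j \<Rightarrow> L j)"

lemma env_cons_simps [simp]: "env_cons x L 0 = x" "env_cons x L (Suc i) = L i"
  by (simp_all add: env_cons_def)

lemma env_cons_liftT [simp]:
  "(\<lambda>i. liftT k (env_cons x L i)) = env_cons (liftT k x) (\<lambda>i. liftT k (L i))"
  by (rule ext) (simp add: env_cons_def split: nat.split)

lemma env_cons_substT [simp]:
  "(\<lambda>i. substT k u (env_cons x L i)) = env_cons (substT k u x) (\<lambda>i. substT k u (L i))"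
  by (rule ext) (simp add: env_cons_def split: nat.split)

text \<open>The continuation passed to the translated step function of a recursor: it feeds the
  value of \<open>s\<close> with the computation of the predecessor (variable 2) and then with the
  recursive result (variable 1) and the outer continuation (variable 0).\<close>
definition step_kont :: tm where
  "step_kont = TLam Nat (TApp (TApp (TVar 0) (TLam Nat (TApp (TVar 0) (TVar 4))))
                       (TLam Nat (TApp (TApp (TVar 0) (TVar 3)) (TVar 2))))"

text \<open>\<open>step_kont\<close> only refers to the three variables bound by the step function.\<close>
lemma liftT_step_kont [simp]: "3 \<le> k \<Longrightarrow> liftT k step_kont = step_kont"
  by (simp add: step_kont_def)

lemma substT_step_kont [simp]: "3 \<le> k \<Longrightarrow> substT k u step_kont = step_kont"
  by (simp add: step_kont_def)

text \<open>A value of arrow type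
  is a curried function taking a computation and a continuation.\<close>
primrec cps :: "(nat \<Rightarrow> tm) \<Rightarrow> (nat \<Rightarrow> tm) \<Rightarrow> trm \<Rightarrow> tm \<Rightarrow> tm"
  and cpsc :: "(nat \<Rightarrow> tm) \<Rightarrow> (nat \<Rightarrow> tm) \<Rightarrow> cmd \<Rightarrow> tm" where
  "cps L M (LVar i) \<kappa> = TApp (L i) \<kappa>"
| "cps L M (LLam \<rho> t) \<kappa> =
     TApp \<kappa> (TLam Nat (TLam Nat (cps (env_cons (TVar 1) (up (up L))) (up (up M)) t (TVar 0))))"
| "cps L M (LApp t s) \<kappa> = cps L M t (TLam Nat (TApp (TApp (TVar 0)
     (TLam Nat (cps (up (up L)) (up (up M)) s (TVar 0)))) (liftT 0 \<kappa>)))"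
| "cps L M (LMu \<rho> c) \<kappa> = cpsc L (env_cons \<kappa> M) c"
| "cps L M LZero \<kappa> = TApp \<kappa> TZero"
| "cps L M (LSuc t) \<kappa> = cps L M t (TLam Nat (TApp (liftT 0 \<kappa>) (TSuc (TVar 0))))"
| "cps L M (LNrec \<rho> r s t) \<kappa> = cps L M t (TLam Nat (TApp (TNrec Nat
     (TLam Nat (cps (up (up L)) (up (up M)) r (TVar 0)))
     (TLam Nat (TLam Nat (TLam Nat (cps (up (up (up (up L)))) (up (up (up (up M)))) s step_kont))))
     (TVar 0)) (liftT 0 \<kappa>)))"
| "cpsc L M (LPass i t) = cps L M t (M i)"

lemma cps_liftT:
  "liftT j (cps L M t \<kappa>) = cps (\<lambda>i. liftT j (L i)) (\<lambda>i. liftT j (M i)) t (liftT j \<kappa>)"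
  "liftT j (cpsc L M c) = cpsc (\<lambda>i. liftT j (L i)) (\<lambda>i. liftT j (M i)) c"
  by (induct t and c arbitrary: j L M \<kappa> and j L M) (simp_all add: numeral_eq_Suc)

lemma cps_substT:
  "substT j u (cps L M t \<kappa>) = cps (\<lambda>i. substT j u (L i)) (\<lambda>i. substT j u (M i)) t (substT j u \<kappa>)"
  "substT j u (cpsc L M c) = cpsc (\<lambda>i. substT j u (L i)) (\<lambda>i. substT j u (M i)) c"
  by (induct t and c arbitrary: j u L M \<kappa> and j u L M) (simp_all add: numeral_eq_Suc)

text \<open>Renamings of lambda-mu-T variables become reindexings of the environments.\<close>
definition skip :: "nat \<Rightarrow> nat \<Rightarrow> nat" where
  "skip k i = (if i < k then i else Suc i)"

definition low :: "nat \<Rightarrow> nat \<Rightarrow> nat" where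
  "low k i = (if k < i then i - 1 else i)"

lemma skip_0 [simp]: "skip 0 i = Suc i"
  by (simp add: skip_def)

lemma low_simps [simp]: "low (Suc k) (Suc i) = Suc (low k i)" "low (Suc k) 0 = 0" "low 0 (Suc i) = i"
  by (auto simp: low_def)

lemma env_cons_skip [simp]: "(\<lambda>i. env_cons x g (skip (Suc k) i)) = env_cons x (\<lambda>i. g (skip k i))"
  by (rule ext) (simp add: env_cons_def skip_def split: nat.split)

lemma env_cons_low [simp]: "(\<lambda>i. env_cons x g (low (Suc k) i)) = env_cons x (\<lambda>i. g (low k i))"
  by (rule ext) (simp add: env_cons_def low_def split: nat.split)

lemma cps_liftl:
  "cps L M (liftl k t) \<kappa> = cps (\<lambda>i. L (skip k i)) M t \<kappa>"
  "cpsc L M (liftlc k c) = cpsc (\<lambda>i. L (skip k i)) M c"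
  by (induct t and c arbitrary: k L M \<kappa> and k L M) (simp_all add: skip_def [symmetric])

lemma cps_liftm:
  "cps L M (liftm k t) \<kappa> = cps L (\<lambda>i. M (skip k i)) t \<kappa>"
  "cpsc L M (liftmc k c) = cpsc L (\<lambda>i. M (skip k i)) c"
  by (induct t and c arbitrary: k L M \<kappa> and k L M) (simp_all add: skip_def [symmetric])

lemma cps_lowerm:
  "cps L M (lowerm k t) \<kappa> = cps L (\<lambda>i. M (low k i)) t \<kappa>"
  "cpsc L M (lowermc k c) = cpsc L (\<lambda>i. M (low k i)) c"
  by (induct t and c arbitrary: k L M \<kappa> and k L M) (simp_all add: low_def [symmetric])

lemma cps_mfree:
  "\<not> mfree k t \<Longrightarrow> (\<forall>i. i \<noteq> k \<longrightarrow> M i = M' i) \<Longrightarrow> cps L M t \<kappa> = cps L M' t \<kappa>"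
  "\<not> mfreec k c \<Longrightarrow> (\<forall>i. i \<noteq> k \<longrightarrow> M i = M' i) \<Longrightarrow> cpsc L M c = cpsc L M' c"
proof (induct t and c arbitrary: k L M M' \<kappa> and k L M M')
  case (LMu \<rho> c)
  then have "\<forall>i. i \<noteq> Suc k \<longrightarrow> env_cons \<kappa> M i = env_cons \<kappa> M' i"
    by (auto simp: env_cons_def split: nat.split)
  then show ?case using LMu by simp
next
  case (LApp t s)
  then show ?case
    using LApp(1)[of k M M'] LApp(2)[of k "up (up M)" "up (up M')"] by simp
next
  case (LLam \<rho> t)
  then show ?case
    using LLam(1)[of k "up (up M)" "up (up M')"] by simp
next
  case (LNrec \<rho> r s t)
  then show ?case
    using LNrec(1)[of k "up (up M)" "up (up M')"] LNrec(3)[of k M M']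
      LNrec(2)[of k "up (up (up (up M)))" "up (up (up (up M')))"] by simp
next
  case (LPass i t)
  then show ?case by (cases "i = k") auto
qed simp_all

lemma cps_cong:
  "(\<forall>i. convT (M i) (M' i)) \<Longrightarrow> convT \<kappa> \<kappa>' \<Longrightarrow> convT (cps L M t \<kappa>) (cps L M' t \<kappa>')"
  "(\<forall>i. convT (M i) (M' i)) \<Longrightarrow> convT (cpsc L M c) (cpsc L M' c)"
proof (induct t and c arbitrary: L M M' \<kappa> \<kappa>' and L M M')
  case (LMu \<rho> c)
  then show ?case by (simp add: env_cons_def split: nat.split)
qed (simp_all add: convT_App convT_Lam convT_liftT convT_Nrec convT_Suc)

lemma cps_cong_kont: "convT \<kappa> \<kappa>' \<Longrightarrow> convT (cps L M t \<kappa>) (cps L M t \<kappa>')"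
  by (simp add: cps_cong)

text \<open>A term \<open>s\<close> is passed to a function as the suspended computation \<open>cps_comp L M s\<close>.\<close>
abbreviation cps_comp :: "(nat \<Rightarrow> tm) \<Rightarrow> (nat \<Rightarrow> tm) \<Rightarrow> trm \<Rightarrow> tm" where
  "cps_comp L M s \<equiv> TLam Nat (cps (up L) (up M) s (TVar 0))"

definition subst_env :: "(nat \<Rightarrow> tm) \<Rightarrow> (nat \<Rightarrow> tm) \<Rightarrow> nat \<Rightarrow> trm \<Rightarrow> nat \<Rightarrow> tm" where
  "subst_env L M k s i = (if i = k then cps_comp L M s else L (low k i))"

lemma liftT_subst_env [simp]:
  "liftT j (subst_env L M k s i) = subst_env (\<lambda>i. liftT j (L i)) (\<lambda>i. liftT j (M i)) k s i"
  by (simp add: subst_env_def cps_liftT)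

lemma subst_env_lam:
  "subst_env (env_cons x L) M (Suc k) (liftl 0 s) = env_cons x (subst_env L M k s)"
  by (rule ext) (simp add: subst_env_def cps_liftl env_cons_def split: nat.split)

lemma subst_env_mu: "subst_env L (env_cons x M) k (liftm 0 s) = subst_env L M k s"
  by (rule ext) (simp add: subst_env_def cps_liftm)

lemma cps_substl:
  "convT (cps (subst_env L M k s) M t \<kappa>) (cps L M (substl k s t) \<kappa>)"
  "convT (cpsc (subst_env L M k s) M c) (cpsc L M (substlc k s c))"
proof (induct t and c arbitrary: L M k s \<kappa> and L M k s)
  case (LVar i)
  show ?case
  proof (cases "i = k")
    case True
    then have "convT (cps (subst_env L M k s) M (LVar i) \<kappa>)
        (substT 0 \<kappa> (cps (up L) (up M) s (TVar 0)))"
      by (simp add: subst_env_def convT_beta)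
    then show ?thesis using True by (simp add: cps_substT)
  next
    case False
    then show ?thesis by (simp add: subst_env_def low_def)
  qed
next
  case (LLam \<rho> t)
  have "convT
      (cps (subst_env (env_cons (TVar 1) (up (up L))) (up (up M)) (Suc k) (liftl 0 s)) (up (up M)) t (TVar 0))
      (cps (env_cons (TVar 1) (up (up L))) (up (up M)) (substl (Suc k) (liftl 0 s) t) (TVar 0))"
    by (rule LLam)
  then show ?case by (simp add: subst_env_lam convT_App convT_Lam)
next
  case (LApp t u)
  have "convT (cps (subst_env (up (up L)) (up (up M)) k s) (up (up M)) u (TVar 0))
      (cps (up (up L)) (up (up M)) (substl k s u) (TVar 0))"
    by (rule LApp(2))
  then show ?case
    by (simp only: cps.simps substl.simps)
      (rule convT_trans[OF LApp(1) cps_cong_kont], simp add: convT_App convT_Lam)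
next
  case (LMu \<rho> c)
  then show ?case
    using LMu[of L "env_cons \<kappa> M" k "liftm 0 s"] by (simp add: subst_env_mu)
next
  case (LNrec \<rho> r u t)
  have "convT (cps (subst_env (up (up L)) (up (up M)) k s) (up (up M)) r (TVar 0))
      (cps (up (up L)) (up (up M)) (substl k s r) (TVar 0))"
    by (rule LNrec(1))
  moreover have "convT
      (cps (subst_env (up (up (up (up L)))) (up (up (up (up M)))) k s) (up (up (up (up M)))) u step_kont)
      (cps (up (up (up (up L)))) (up (up (up (up M)))) (substl k s u) step_kont)"
    by (rule LNrec(2))
  ultimately show ?case
    by (simp only: cps.simps substl.simps)
      (rule convT_trans[OF LNrec(3) cps_cong_kont], simp add: convT_App convT_Lam convT_Nrec)
qed simp_all

text \<open>An evaluation context translates into a transformer of continuations: plugging a term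
  into \<open>E\<close> runs the term with the continuation \<open>cps_ctx L M E \<kappa>\<close>.\<close>
primrec cps_ctx :: "(nat \<Rightarrow> tm) \<Rightarrow> (nat \<Rightarrow> tm) \<Rightarrow> ctx \<Rightarrow> tm \<Rightarrow> tm" where
  "cps_ctx L M Hole \<kappa> = \<kappa>"
| "cps_ctx L M (CApp E t) \<kappa> = cps_ctx L M E (TLam Nat (TApp (TApp (TVar 0)
     (TLam Nat (cps (up (up L)) (up (up M)) t (TVar 0)))) (liftT 0 \<kappa>)))"
| "cps_ctx L M (CSuc E) \<kappa> = cps_ctx L M E (TLam Nat (TApp (liftT 0 \<kappa>) (TSuc (TVar 0))))"
| "cps_ctx L M (CNrec \<rho> r s E) \<kappa> = cps_ctx L M E (TLam Nat (TApp (TNrec Nat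
     (TLam Nat (cps (up (up L)) (up (up M)) r (TVar 0)))
     (TLam Nat (TLam Nat (TLam Nat (cps (up (up (up (up L)))) (up (up (up (up M)))) s step_kont))))
     (TVar 0)) (liftT 0 \<kappa>)))"

lemma cps_plug: "cps L M (plug E u) \<kappa> = cps L M u (cps_ctx L M E \<kappa>)"
  by (induct E arbitrary: \<kappa>) auto

lemma cps_ctx_liftT:
  "liftT j (cps_ctx L M E \<kappa>) = cps_ctx (\<lambda>i. liftT j (L i)) (\<lambda>i. liftT j (M i)) E (liftT j \<kappa>)"
  by (induct E arbitrary: \<kappa>) (auto simp: cps_liftT)

lemma cps_ctx_liftl: "cps_ctx L M (ctx_liftl n E) \<kappa> = cps_ctx (\<lambda>i. L (skip n i)) M E \<kappa>"
  by (induct E arbitrary: \<kappa>) (auto simp: cps_liftl)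

lemma cps_ctx_liftm: "cps_ctx L M (ctx_liftm n E) \<kappa> = cps_ctx L (\<lambda>i. M (skip n i)) E \<kappa>"
  by (induct E arbitrary: \<kappa>) (auto simp: cps_liftm)

lemma up_fun_upd_ctx:
  "(up M)(k := cps_ctx (up L) (up M) E (liftT 0 x)) = up (M(k := cps_ctx L M E x))"
  by (rule ext) (simp add: cps_ctx_liftT)

lemma cps_mstruct:
  "convT (cps L M (mstruct k j E t) \<kappa>) (cps L (M(k := cps_ctx L M E (M j))) t \<kappa>)"
  "convT (cpsc L M (mstructc k j E c)) (cpsc L (M(k := cps_ctx L M E (M j))) c)"
proof (induct t and c arbitrary: L M k j E \<kappa> and L M k j E)
  case (LLam \<rho> t)
  let ?L2 = "env_cons (TVar 1) (up (up L))"
  have "convT (cps ?L2 (up (up M)) (mstruct k j (ctx_liftl 0 E) t) (TVar 0))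
     (cps ?L2 ((up (up M))(k := cps_ctx ?L2 (up (up M)) (ctx_liftl 0 E) (up (up M) j))) t (TVar 0))"
    by (rule LLam)
  then show ?case
    by (simp add: cps_ctx_liftl up_fun_upd_ctx convT_App convT_Lam del: fun_upd_apply)
next
  case (LApp t u)
  have "convT (cps (up (up L)) (up (up M)) (mstruct k j E u) (TVar 0))
     (cps (up (up L)) ((up (up M))(k := cps_ctx (up (up L)) (up (up M)) E (up (up M) j))) u (TVar 0))"
    by (rule LApp(2))
  then show ?case
    by (simp only: cps.simps mstruct.simps)
      (rule convT_trans[OF LApp(1) cps_cong_kont], simp add: up_fun_upd_ctx convT_App convT_Lam del: fun_upd_apply)
next
  case (LMu \<rho> c)
  have "(env_cons \<kappa> M)(Suc k := cps_ctx L (env_cons \<kappa> M) (ctx_liftm 0 E) (env_cons \<kappa> M (Suc j)))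
      = env_cons \<kappa> (M(k := cps_ctx L M E (M j)))"
    by (rule ext) (simp add: cps_ctx_liftm env_cons_def split: nat.split)
  then show ?case
    using LMu[of L "env_cons \<kappa> M" "Suc k" "Suc j" "ctx_liftm 0 E"] by (simp del: fun_upd_apply)
next
  case (LNrec \<rho> r u t)
  have "convT (cps (up (up L)) (up (up M)) (mstruct k j E r) (TVar 0))
     (cps (up (up L)) ((up (up M))(k := cps_ctx (up (up L)) (up (up M)) E (up (up M) j))) r (TVar 0))"
    by (rule LNrec(1))
  moreover have "convT (cps (up (up (up (up L)))) (up (up (up (up M)))) (mstruct k j E u) step_kont)
     (cps (up (up (up (up L)))) ((up (up (up (up M))))(k :=
        cps_ctx (up (up (up (up L)))) (up (up (up (up M)))) E (up (up (up (up M))) j))) u step_kont)"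
    by (rule LNrec(2))
  ultimately show ?case
    by (simp only: cps.simps mstruct.simps)
      (rule convT_trans[OF LNrec(3) cps_cong_kont],
        simp add: up_fun_upd_ctx convT_App convT_Lam convT_Nrec del: fun_upd_apply)
next
  case (LPass i t)
  then show ?case
    using LPass[of L M k j E "(M(k := cps_ctx L M E (M j))) i"] by (auto simp: cps_plug)
qed simp_all

lemma cps_numl: "convT (cps L M (numl n) \<kappa>) (TApp \<kappa> (numT n))"
proof (induct n arbitrary: \<kappa>)
  case (Suc n)
  have "convT (cps L M (numl (Suc n)) \<kappa>) (TApp (TLam Nat (TApp (liftT 0 \<kappa>) (TSuc (TVar 0)))) (numT n))"
    using Suc by simp
  also have "convT \<dots> (TApp \<kappa> (numT (Suc n)))"
    by (simp add: convT_head)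
  finally show ?case .
qed simp

definition cps_step :: "(nat \<Rightarrow> tm) \<Rightarrow> (nat \<Rightarrow> tm) \<Rightarrow> trm \<Rightarrow> tm" where
  "cps_step L M s = TLam Nat (TLam Nat (TLam Nat (cps (up (up (up L))) (up (up (up M))) s step_kont)))"

definition cps_nrec :: "(nat \<Rightarrow> tm) \<Rightarrow> (nat \<Rightarrow> tm) \<Rightarrow> trm \<Rightarrow> trm \<Rightarrow> tm \<Rightarrow> tm" where
  "cps_nrec L M r s x = TNrec Nat (cps_comp L M r) (cps_step L M s) x"

lemma cps_LNrec:
  "cps L M (LNrec \<rho> r s t) \<kappa> = cps L M t (TLam Nat (TApp (cps_nrec (up L) (up M) r s (TVar 0)) (liftT 0 \<kappa>)))"
  by (simp add: cps_nrec_def cps_step_def)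

lemma cps_nrec_liftT:
  "liftT j (cps_nrec L M r s x) = cps_nrec (\<lambda>i. liftT j (L i)) (\<lambda>i. liftT j (M i)) r s (liftT j x)"
  by (simp add: cps_nrec_def cps_step_def cps_liftT)

lemma cps_nrec_substT:
  "substT j u (cps_nrec L M r s x) = cps_nrec (\<lambda>i. substT j u (L i)) (\<lambda>i. substT j u (M i)) r s (substT j u x)"
  by (simp add: cps_nrec_def cps_step_def cps_substT)

lemma cps_LNrec_numl: "convT (cps L M (LNrec \<rho> r s (numl n)) \<kappa>) (TApp (cps_nrec L M r s (numT n)) \<kappa>)"
proof -
  have "convT (cps L M (LNrec \<rho> r s (numl n)) \<kappa>)
     (TApp (TLam Nat (TApp (cps_nrec (up L) (up M) r s (TVar 0)) (liftT 0 \<kappa>))) (numT n))"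
    unfolding cps_LNrec by (rule cps_numl)
  also have "convT \<dots> (TApp (cps_nrec L M r s (numT n)) \<kappa>)"
    by (simp add: convT_head cps_nrec_substT)
  finally show ?thesis .
qed

text \<open>On a numeral, the translated recursor computes to an abstraction; this licenses the
  eta-step needed when the recursive result is passed on as a computation.\<close>
lemma cps_nrec_numT_lam: "\<exists>Y. convT (cps_nrec L M r s (numT n)) (TLam Nat Y)"
proof (cases n)
  case 0
  then show ?thesis by (auto simp: cps_nrec_def intro: stepT_convT stepT.nrec_zero)
next
  case (Suc m)
  let ?A = "cps_nrec L M r s (numT m)"
    and ?X = "cps (up (up (up L))) (up (up (up M))) s step_kont"
  have "convT (cps_nrec L M r s (numT n)) (TApp (TApp (cps_step L M s) (numT m)) ?A)"
    using Suc by (auto simp: cps_nrec_def intro: stepT_convT stepT.nrec_suc)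
  also have "convT \<dots> (TApp (TLam Nat (TLam Nat (substT (Suc (Suc 0)) (numT m) ?X))) ?A)"
    using convT_App[OF convT_beta convT_refl, of Nat "TLam Nat (TLam Nat ?X)" "numT m" ?A]
    by (simp add: cps_step_def)
  also have "convT \<dots> (substT 0 ?A (TLam Nat (substT (Suc (Suc 0)) (numT m) ?X)))"
    by (rule convT_beta)
  finally show ?thesis by (simp only: substT.simps) blast
qed

text \<open>Eta-conversion, valid for terms convertible to an abstraction.\<close>
lemma eta_convT: "convT X (TLam Nat Y) \<Longrightarrow> convT (TLam Nat (TApp (liftT 0 X) (TVar 0))) X"
proof -
  assume X: "convT X (TLam Nat Y)"
  have "convT (TLam Nat (TApp (liftT 0 X) (TVar 0))) (TLam Nat (TApp (liftT 0 (TLam Nat Y)) (TVar 0)))"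
    using convT_Lam[OF convT_App[OF convT_liftT[OF X] convT_refl], of Nat 0 "TVar 0"] by simp
  also have "convT \<dots> (TLam Nat Y)"
    using convT_Lam[OF convT_beta[of Nat "liftT 1 Y" "TVar 0"]] by simp
  also have "convT \<dots> X" using X by (rule convT_sym)
  finally show ?thesis .
qed

definition step_kont_inst :: "tm \<Rightarrow> tm \<Rightarrow> tm \<Rightarrow> tm" where
  "step_kont_inst x A \<kappa> = TLam Nat (TApp (TApp (TVar 0) (TLam Nat (TApp (TVar 0) (liftT 0 (liftT 0 x)))))
     (TLam Nat (TApp (TApp (TVar 0) (liftT 0 (liftT 0 A))) (liftT 0 (liftT 0 \<kappa>)))))"

lemma cps_step_app:
  "convT (TApp (TApp (TApp (cps_step L M s) x) A) \<kappa>) (cps L M s (step_kont_inst x A \<kappa>))"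
  by (simp add: cps_step_def step_kont_inst_def convT_head cps_substT step_kont_def)

lemma cps_nrec_suc_sim:
  "convT (cps L M (LNrec \<rho> r s (LSuc (numl n))) \<kappa>)
     (cps L M (LApp (LApp s (numl n)) (LNrec \<rho> r s (numl n))) \<kappa>)"
proof -
  let ?m = "numT n" and ?A = "cps_nrec L M r s (numT n)"
  have "convT (cps L M (LNrec \<rho> r s (LSuc (numl n))) \<kappa>) (TApp (cps_nrec L M r s (TSuc ?m)) \<kappa>)"
    using cps_LNrec_numl[of L M \<rho> r s "Suc n" \<kappa>] by simp
  also have "convT \<dots> (TApp (TApp (TApp (cps_step L M s) ?m) ?A) \<kappa>)"
    unfolding cps_nrec_def by (rule convT_App[OF stepT_convT[OF stepT.nrec_suc] convT_refl])
  also have "convT \<dots> (cps L M s (step_kont_inst ?m ?A \<kappa>))"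
    by (rule cps_step_app)
  also have "convT \<dots> (cps L M (LApp (LApp s (numl n)) (LNrec \<rho> r s (numl n))) \<kappa>)"
  proof -
    let ?L2 = "up (up L)" and ?M2 = "up (up M)"
    have num: "convT (TLam Nat (TApp (TVar 0) ?m)) (cps_comp (up L) (up M) (numl n))"
      by (rule convT_Lam, rule convT_sym, rule cps_numl)
    obtain Y where Y: "convT (cps_nrec ?L2 ?M2 r s ?m) (TLam Nat Y)"
      using cps_nrec_numT_lam by blast
    have "convT (cps_comp ?L2 ?M2 (LNrec \<rho> r s (numl n)))
        (TLam Nat (TApp (cps_nrec (up ?L2) (up ?M2) r s ?m) (TVar 0)))"
      by (rule convT_Lam, rule cps_LNrec_numl)
    also have "convT \<dots> (cps_nrec ?L2 ?M2 r s ?m)"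
      using eta_convT[OF Y] by (simp add: cps_nrec_liftT)
    finally have rec: "convT (cps_nrec ?L2 ?M2 r s ?m) (cps_comp ?L2 ?M2 (LNrec \<rho> r s (numl n)))"
      by (rule convT_sym)
    show ?thesis
      using num rec
      by (simp add: step_kont_inst_def, intro cps_cong_kont)
        (simp add: convT_App convT_Lam cps_nrec_liftT cps_liftT)
  qed
  finally show ?thesis .
qed

lemma cps_beta_sim: "convT (cps L M (LApp (LLam \<rho> t) r) \<kappa>) (cps L M (substl 0 r t) \<kappa>)"
proof -
  let ?R = "cps_comp L M r"
    and ?body = "cps (env_cons (TVar 1) (up (up L))) (up (up M)) t (TVar 0)"
  have contract: "convT (TApp (TLam Nat (TApp (TApp (TVar 0) (liftT 0 R)) (liftT 0 \<kappa>))) (TLam Nat (TLam Nat X)))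
      (substT 0 \<kappa> (substT 1 (liftT 0 R) X))" for R X
    by (simp add: convT_head)
  have instantiate: "substT 0 \<kappa> (substT 1 (liftT 0 R) ?body) = cps (env_cons R L) M t \<kappa>" for R
    by (simp add: cps_substT)
  have env: "env_cons ?R L = subst_env L M 0 r"
    by (rule ext) (simp add: env_cons_def subst_env_def split: nat.split)
  have "convT (cps L M (LApp (LLam \<rho> t) r) \<kappa>)
      (TApp (TLam Nat (TApp (TApp (TVar 0) (liftT 0 ?R)) (liftT 0 \<kappa>))) (TLam Nat (TLam Nat ?body)))"
    by (simp add: cps_liftT)
  also have "convT \<dots> (substT 0 \<kappa> (substT 1 (liftT 0 ?R) ?body))"
    by (rule contract)
  also have "convT \<dots> (cps (subst_env L M 0 r) M t \<kappa>)"
    by (simp only: instantiate env convT_refl)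
  also have "convT \<dots> (cps L M (substl 0 r t) \<kappa>)"
    by (rule cps_substl)
  finally show ?thesis .
qed

text \<open>The three rules moving a mu-abstraction out of an evaluation context
  (\<open>S (mu a.c)\<close>, \<open>(mu a.c) s\<close>, \<open>nrec r s (mu a.c)\<close>) are simulated uniformly.\<close>
lemma cps_mu_plug:
  "convT (cps L M (LMu \<rho>' (mstructc 0 0 (ctx_liftm 0 E) c)) \<kappa>) (cps L M (plug E (LMu \<rho> c)) \<kappa>)"
proof -
  have "(env_cons \<kappa> M)(0 := cps_ctx L (env_cons \<kappa> M) (ctx_liftm 0 E) (env_cons \<kappa> M 0))
      = env_cons (cps_ctx L M E \<kappa>) M"
    by (rule ext) (simp add: cps_ctx_liftm env_cons_def split: nat.split)
  then show ?thesis
    using cps_mstruct(2)[of L "env_cons \<kappa> M" 0 0 "ctx_liftm 0 E" c] by (simp add: cps_plug)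
qed

lemma cps_stepl:
  "stepl a b \<Longrightarrow> convT (cps L M a \<kappa>) (cps L M b \<kappa>)"
  "steplc c d \<Longrightarrow> convT (cpsc L M c) (cpsc L M d)"
proof (induct arbitrary: L M \<kappa> and L M rule: stepl_steplc.inducts)
  case (beta \<rho> t r)
  then show ?case by (rule cps_beta_sim)
next
  case (suc_mu \<rho> c)
  then show ?case
    using cps_mu_plug[of L M \<rho> "CSuc Hole" c \<kappa> \<rho>] by (simp add: convT_sym)
next
  case (app_mu \<rho> c s)
  then show ?case
    using cps_mu_plug[of L M "cod \<rho>" "CApp Hole s" c \<kappa> \<rho>] by (simp add: convT_sym)
next
  case (nrec_mu \<rho> r s \<sigma> c)
  then show ?case
    using cps_mu_plug[of L M \<rho> "CNrec \<rho> r s Hole" c \<kappa> \<sigma>] by (simp add: convT_sym)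
next
  case (mu_eta t \<rho>)
  have "cps L (env_cons \<kappa> M) t \<kappa> = cps L (\<lambda>i. M (low 0 i)) t \<kappa>"
    by (rule cps_mfree(1)[OF mu_eta]) (simp add: env_cons_def split: nat.split)
  then show ?case by (simp add: cps_lowerm)
next
  case (pass_mu a \<rho> c)
  have "(\<lambda>i. M (low 0 i))(0 := cps_ctx L (\<lambda>i. M (low 0 i)) Hole (M (low 0 (Suc a)))) = env_cons (M a) M"
    by (rule ext) (simp add: env_cons_def split: nat.split)
  then show ?case
    using cps_mstruct(2)[of L "\<lambda>i. M (low 0 i)" 0 "Suc a" Hole c]
    by (simp add: convT_sym cps_lowerm del: fun_upd_apply)
next
  case (nrec_zero \<rho> r s)
  have "convT (cps L M (LNrec \<rho> r s (numl 0)) \<kappa>) (TApp (cps_nrec L M r s (numT 0)) \<kappa>)"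
    by (rule cps_LNrec_numl)
  also have "convT \<dots> (cps L M r \<kappa>)"
    by (simp add: cps_nrec_def convT_head cps_substT)
  finally show ?case by simp
next
  case (nrec_suc \<rho> r s n)
  then show ?case by (rule cps_nrec_suc_sim)
qed (simp_all add: cps_cong_kont convT_App convT_Lam convT_Nrec)

lemma cps_convl: "convl a b \<Longrightarrow> convT (cps L M a \<kappa>) (cps L M b \<kappa>)"
  unfolding convl_def
proof (induct rule: equivclp_induct)
  case (step y z)
  then show ?case using cps_stepl(1) convT_sym convT_trans by blast
qed simp

section \<open>The typed CPS translation\<close>

primrec vty :: "ty \<Rightarrow> ty" where
  "vty Nat = Nat"
| "vty (Arr \<sigma> \<tau>) = Arr (Arr (Arr (vty \<sigma>) Nat) Nat) (Arr (Arr (vty \<tau>) Nat) Nat)"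

definition kty :: "ty \<Rightarrow> ty" where
  "kty \<rho> = Arr (vty \<rho>) Nat"

definition cty :: "ty \<Rightarrow> ty" where
  "cty \<rho> = Arr (kty \<rho>) Nat"

text \<open>The type of a term, read off from its annotations (correct for typable terms).\<close>
fun type_of :: "ty list \<Rightarrow> trm \<Rightarrow> ty" where
  "type_of \<Gamma> (LVar i) = \<Gamma> ! i"
| "type_of \<Gamma> (LLam \<sigma> t) = Arr \<sigma> (type_of (\<sigma> # \<Gamma>) t)"
| "type_of \<Gamma> (LApp t s) = cod (type_of \<Gamma> t)"
| "type_of \<Gamma> (LMu \<rho> c) = \<rho>"
| "type_of \<Gamma> LZero = Nat"
| "type_of \<Gamma> (LSuc t) = Nat"
| "type_of \<Gamma> (LNrec \<rho> r s t) = \<rho>"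

lemma type_of_correct: "typl \<Gamma> \<Delta> t \<rho> \<Longrightarrow> type_of \<Gamma> t = \<rho>"
proof -
  have "typl \<Gamma> \<Delta> t \<rho> \<Longrightarrow> type_of \<Gamma> t = \<rho>" "typlc \<Gamma> \<Delta> c \<Longrightarrow> True" for c
    by (induct rule: typl_typlc.inducts) auto
  then show "typl \<Gamma> \<Delta> t \<rho> \<Longrightarrow> type_of \<Gamma> t = \<rho>" by blast
qed

definition tstep_kont :: "ty \<Rightarrow> tm" where
  "tstep_kont \<rho> = TLam (vty (Arr Nat (Arr \<rho> \<rho>))) (TApp (TApp (TVar 0) (TLam (kty Nat) (TApp (TVar 0) (TVar 4))))
                       (TLam (vty (Arr \<rho> \<rho>)) (TApp (TApp (TVar 0) (TVar 3)) (TVar 2))))"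

primrec tcps :: "ty list \<Rightarrow> (nat \<Rightarrow> tm) \<Rightarrow> (nat \<Rightarrow> tm) \<Rightarrow> trm \<Rightarrow> tm \<Rightarrow> tm"
  and tcpsc :: "ty list \<Rightarrow> (nat \<Rightarrow> tm) \<Rightarrow> (nat \<Rightarrow> tm) \<Rightarrow> cmd \<Rightarrow> tm" where
  "tcps \<Gamma> L M (LVar i) \<kappa> = TApp (L i) \<kappa>"
| "tcps \<Gamma> L M (LLam \<sigma> t) \<kappa> = TApp \<kappa> (TLam (cty \<sigma>) (TLam (kty (type_of (\<sigma> # \<Gamma>) t))
     (tcps (\<sigma> # \<Gamma>) (env_cons (TVar 1) (up (up L))) (up (up M)) t (TVar 0))))"
| "tcps \<Gamma> L M (LApp t s) \<kappa> = tcps \<Gamma> L M t (TLam (vty (type_of \<Gamma> t)) (TApp (TApp (TVar 0)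
     (TLam (kty (type_of \<Gamma> s)) (tcps \<Gamma> (up (up L)) (up (up M)) s (TVar 0)))) (liftT 0 \<kappa>)))"
| "tcps \<Gamma> L M (LMu \<rho> c) \<kappa> = tcpsc \<Gamma> L (env_cons \<kappa> M) c"
| "tcps \<Gamma> L M LZero \<kappa> = TApp \<kappa> TZero"
| "tcps \<Gamma> L M (LSuc t) \<kappa> = tcps \<Gamma> L M t (TLam Nat (TApp (liftT 0 \<kappa>) (TSuc (TVar 0))))"
| "tcps \<Gamma> L M (LNrec \<rho> r s t) \<kappa> = tcps \<Gamma> L M t (TLam Nat (TApp (TNrec (cty \<rho>)
     (TLam (kty \<rho>) (tcps \<Gamma> (up (up L)) (up (up M)) r (TVar 0)))
     (TLam Nat (TLam (cty \<rho>) (TLam (kty \<rho>)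
        (tcps \<Gamma> (up (up (up (up L)))) (up (up (up (up M)))) s (tstep_kont \<rho>)))))
     (TVar 0)) (liftT 0 \<kappa>)))"
| "tcpsc \<Gamma> L M (LPass i t) = tcps \<Gamma> L M t (M i)"

lemma eraseT_tstep_kont [simp]: "eraseT (tstep_kont \<rho>) = step_kont"
  by (simp add: tstep_kont_def step_kont_def)

lemma eraseT_tcps:
  "eraseT (tcps \<Gamma> L M t \<kappa>) = cps (\<lambda>i. eraseT (L i)) (\<lambda>i. eraseT (M i)) t (eraseT \<kappa>)"
  "eraseT (tcpsc \<Gamma> L M c) = cpsc (\<lambda>i. eraseT (L i)) (\<lambda>i. eraseT (M i)) c"
proof -
  have [simp]: "(\<lambda>i. eraseT (env_cons x g i)) = env_cons (eraseT x) (\<lambda>i. eraseT (g i))" for x g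
    by (rule ext) (simp add: env_cons_def split: nat.split)
  show "eraseT (tcps \<Gamma> L M t \<kappa>) = cps (\<lambda>i. eraseT (L i)) (\<lambda>i. eraseT (M i)) t (eraseT \<kappa>)"
    "eraseT (tcpsc \<Gamma> L M c) = cpsc (\<lambda>i. eraseT (L i)) (\<lambda>i. eraseT (M i)) c"
    by (induct t and c arbitrary: \<Gamma> L M \<kappa> and \<Gamma> L M) simp_all
qed

lemma typT_liftT:
  "typT E t \<rho> \<Longrightarrow> k \<le> length E \<Longrightarrow> typT (take k E @ \<sigma> # drop k E) (liftT k t) \<rho>"
proof (induct E t \<rho> arbitrary: k rule: typT.induct)
  case (var i E \<rho>)
  then show ?case by (auto intro!: typT.var simp: nth_append min_def)
next
  case (lam \<sigma>' E t \<tau>)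
  then have "typT (take (Suc k) (\<sigma>' # E) @ \<sigma> # drop (Suc k) (\<sigma>' # E)) (liftT (Suc k) t) \<tau>"
    by (metis Suc_le_mono length_Cons)
  then show ?case by (auto intro: typT.lam)
qed (auto intro: typT.intros)

lemma typT_liftT0: "typT E t \<rho> \<Longrightarrow> typT (\<sigma> # E) (liftT 0 t) \<rho>"
  using typT_liftT[of E t \<rho> 0 \<sigma>] by simp

definition env_typed :: "ty list \<Rightarrow> (nat \<Rightarrow> tm) \<Rightarrow> (ty \<Rightarrow> ty) \<Rightarrow> ty list \<Rightarrow> bool" where
  "env_typed E L f \<Gamma> \<longleftrightarrow> (\<forall>i<length \<Gamma>. typT E (L i) (f (\<Gamma> ! i)))"

lemma env_typed_up: "env_typed E L f \<Gamma> \<Longrightarrow> env_typed (\<sigma> # E) (up L) f \<Gamma>"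
  by (simp add: env_typed_def typT_liftT0)

lemma env_typed_cons:
  "typT E x (f \<sigma>) \<Longrightarrow> env_typed E L f \<Gamma> \<Longrightarrow> env_typed E (env_cons x L) f (\<sigma> # \<Gamma>)"
  by (simp add: env_typed_def env_cons_def nth_Cons split: nat.split)

lemma typT_tstep_kont: "typT (kty \<rho> # cty \<rho> # Nat # Nat # E) (tstep_kont \<rho>) (kty (Arr Nat (Arr \<rho> \<rho>)))"
  unfolding tstep_kont_def by (auto intro!: typT.intros simp: kty_def cty_def)

lemma tcps_typed:
  "typl \<Gamma> \<Delta> t \<rho> \<Longrightarrow> env_typed E L cty \<Gamma> \<Longrightarrow> env_typed E M kty \<Delta>
     \<Longrightarrow> typT E \<kappa> (kty \<rho>) \<Longrightarrow> typT E (tcps \<Gamma> L M t \<kappa>) Nat"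
  "typlc \<Gamma> \<Delta> c \<Longrightarrow> env_typed E L cty \<Gamma> \<Longrightarrow> env_typed E M kty \<Delta>
     \<Longrightarrow> typT E (tcpsc \<Gamma> L M c) Nat"
proof (induct arbitrary: E L M \<kappa> and E L M rule: typl_typlc.inducts)
  case (var i \<Gamma> \<rho> \<Delta>)
  then show ?case by (auto intro!: typT.app simp: env_typed_def cty_def)
next
  case (lam \<sigma> \<Gamma> \<Delta> t \<tau>)
  let ?E = "kty \<tau> # cty \<sigma> # E"
  have "typT ?E (tcps (\<sigma> # \<Gamma>) (env_cons (TVar 1) (up (up L))) (up (up M)) t (TVar 0)) Nat"
  proof (rule lam.hyps(2))
    show "env_typed ?E (env_cons (TVar 1) (up (up L))) cty (\<sigma> # \<Gamma>)"
      using lam.prems(1) by (auto intro!: typT.var env_typed_cons env_typed_up)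
    show "env_typed ?E (up (up M)) kty \<Delta>"
      using lam.prems(2) by (auto intro!: env_typed_up)
  qed (auto intro!: typT.var)
  then show ?case using lam type_of_correct[OF lam.hyps(1)]
    by (auto intro!: typT.app typT.lam simp: kty_def cty_def)
next
  case (app \<Gamma> \<Delta> t \<sigma> \<tau> s)
  let ?E = "kty \<sigma> # vty (Arr \<sigma> \<tau>) # E"
  have arg: "typT ?E (tcps \<Gamma> (up (up L)) (up (up M)) s (TVar 0)) Nat"
    by (rule app.hyps(4)) (use app.prems in \<open>auto intro!: typT.var env_typed_up\<close>)
  have kont: "typT (vty (Arr \<sigma> \<tau>) # E) (liftT 0 \<kappa>) (kty \<tau>)"
    using app.prems(3) by (rule typT_liftT0)
  have "typT E (TLam (vty (Arr \<sigma> \<tau>)) (TApp (TApp (TVar 0)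
      (TLam (kty \<sigma>) (tcps \<Gamma> (up (up L)) (up (up M)) s (TVar 0)))) (liftT 0 \<kappa>))) (kty (Arr \<sigma> \<tau>))"
    using arg kont by (auto intro!: typT.intros simp: kty_def cty_def)
  then show ?case
    using app type_of_correct[OF app.hyps(1)] type_of_correct[OF app.hyps(3)] by simp
next
  case (zero \<Gamma> \<Delta>)
  then show ?case by (auto intro!: typT.app typT.zero simp: kty_def)
next
  case (suc \<Gamma> \<Delta> t)
  have "typT E (TLam Nat (TApp (liftT 0 \<kappa>) (TSuc (TVar 0)))) (kty Nat)"
    using typT_liftT0[OF suc.prems(3), of Nat]
    by (auto intro!: typT.lam typT.app typT.suc typT.var simp: kty_def)
  then show ?case using suc by simp
next
  case (nrec \<Gamma> \<Delta> r \<rho> s t)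
  have base: "typT (kty \<rho> # Nat # E) (tcps \<Gamma> (up (up L)) (up (up M)) r (TVar 0)) Nat"
    by (rule nrec.hyps(2)) (use nrec.prems in \<open>auto intro!: typT.var env_typed_up\<close>)
  have step: "typT (kty \<rho> # cty \<rho> # Nat # Nat # E)
      (tcps \<Gamma> (up (up (up (up L)))) (up (up (up (up M)))) s (tstep_kont \<rho>)) Nat"
    by (rule nrec.hyps(4)) (use nrec.prems in \<open>auto intro!: typT_tstep_kont env_typed_up\<close>)
  have "typT (Nat # E) (liftT 0 \<kappa>) (kty \<rho>)"
    using nrec.prems(3) by (rule typT_liftT0)
  with base step have "typT E (TLam Nat (TApp (TNrec (cty \<rho>)
     (TLam (kty \<rho>) (tcps \<Gamma> (up (up L)) (up (up M)) r (TVar 0)))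
     (TLam Nat (TLam (cty \<rho>) (TLam (kty \<rho>)
        (tcps \<Gamma> (up (up (up (up L)))) (up (up (up (up M)))) s (tstep_kont \<rho>)))))
     (TVar 0)) (liftT 0 \<kappa>))) (kty Nat)"
    by (auto intro!: typT.lam typT.app typT.nrec typT.var simp: kty_def cty_def)
  then show ?case using nrec by simp
next
  case (activate \<Gamma> \<rho> \<Delta> c)
  then show ?case by (auto intro!: env_typed_cons)
next
  case (passivate \<Gamma> \<Delta> t \<rho> i)
  then show ?case by (auto simp: env_typed_def)
qed

section \<open>From CPS programs back to numeric functions\<close>

text \<open>\<open>direct n\<close> turns a CPS program \<open>P\<close> for a function \<open>\<nat>\<^sup>n \<rightarrow> \<nat>\<close> into a direct-style
  T-function: it collects the arguments \<open>x\<^sub>1 \<dots> x\<^sub>n\<close> and runs \<open>P\<close> with the continuation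
  that feeds them one by one to the value and finally returns the result.\<close>
primrec direct :: "nat \<Rightarrow> tm" where
  "direct 0 = TLam (Arr (kty Nat) Nat) (TApp (TVar 0) (TLam Nat (TVar 0)))"
| "direct (Suc n) = TLam (Arr (kty (natArr (Suc n))) Nat) (TLam Nat (TApp (direct n)
     (TLam (kty (natArr n)) (TApp (TVar 2) (TLam (vty (natArr (Suc n)))
        (TApp (TApp (TVar 0) (TLam (kty Nat) (TApp (TVar 0) (TVar 3)))) (TVar 1)))))))"

lemma typT_direct: "typT E (direct n) (Arr (Arr (kty (natArr n)) Nat) (natArr n))"
  by (induct n arbitrary: E) (auto intro!: typT.intros simp: kty_def)

lemma substT_eraseT_direct [simp]: "substT k u (eraseT (direct n)) = eraseT (direct n)"
  by (induct n arbitrary: k u) auto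

lemma substT_Suc_numT_liftT [simp]:
  "substT (Suc j) (numT m) (liftT 0 x) = liftT 0 (substT j (numT m) x)"
  using substT_Suc_liftT[of j "numT m" x] by simp

primrec args_kont :: "nat list \<Rightarrow> tm" where
  "args_kont [] = TLam Nat (TVar 0)"
| "args_kont (m # ms) =
     TLam Nat (TApp (TApp (TVar 0) (TLam Nat (TApp (TVar 0) (numT m)))) (liftT 0 (args_kont ms)))"

lemma direct_apply:
  "length ms = n \<Longrightarrow> convT (foldl TApp (TApp (eraseT (direct n)) P) (map numT ms)) (TApp P (args_kont ms))"
proof (induct ms arbitrary: n P)
  case Nil
  then show ?case by (simp add: convT_head)
next
  case (Cons m ms)
  then obtain n' where n: "n = Suc n'" "length ms = n'" by auto
  let ?P' = "TLam Nat (TApp (liftT 0 P)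
      (TLam Nat (TApp (TApp (TVar 0) (TLam Nat (TApp (TVar 0) (numT m)))) (TVar 1))))"
  have "convT (TApp (TApp (eraseT (direct n)) P) (numT m)) (TApp (eraseT (direct n')) ?P')"
    using n by (simp add: convT_head)
  then have "convT (foldl TApp (TApp (eraseT (direct n)) P) (map numT (m # ms)))
      (foldl TApp (TApp (eraseT (direct n')) ?P') (map numT ms))"
    by (simp add: convT_foldl)
  also have "convT \<dots> (TApp ?P' (args_kont ms))" by (rule Cons(1)[OF n(2)])
  also have "convT \<dots> (TApp P (args_kont (m # ms)))" by (simp add: convT_head)
  finally show ?case .
qed

primrec cps_args :: "(nat \<Rightarrow> tm) \<Rightarrow> (nat \<Rightarrow> tm) \<Rightarrow> nat list \<Rightarrow> tm \<Rightarrow> tm" where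
  "cps_args L M [] \<kappa> = \<kappa>"
| "cps_args L M (m # ms) \<kappa> = TLam Nat (TApp (TApp (TVar 0)
     (TLam Nat (cps (up (up L)) (up (up M)) (numl m) (TVar 0)))) (liftT 0 (cps_args L M ms \<kappa>)))"

lemma cps_foldl_numl: "cps L M (foldl LApp t (map numl ms)) \<kappa> = cps L M t (cps_args L M ms \<kappa>)"
  by (induct ms arbitrary: t) auto

lemma cps_args_conv: "convT (cps_args L M ms (TLam Nat (TVar 0))) (args_kont ms)"
  by (induct ms) (auto intro!: convT_Lam convT_App convT_liftT cps_numl)

lemma cps_args_kont:
  assumes "convl (foldl LApp t (map numl ms)) (numl m)"
  shows "convT (cps L M t (args_kont ms)) (numT m)"
proof -
  let ?id = "TLam Nat (TVar 0)"
  have "convT (cps L M t (args_kont ms)) (cps L M t (cps_args L M ms ?id))"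
    by (rule cps_cong_kont, rule convT_sym, rule cps_args_conv)
  also have "cps L M t (cps_args L M ms ?id) = cps L M (foldl LApp t (map numl ms)) ?id"
    by (simp add: cps_foldl_numl)
  also have "convT \<dots> (cps L M (numl m) ?id)"
    using assms by (rule cps_convl)
  also have "convT \<dots> (TApp ?id (numT m))"
    by (rule cps_numl)
  also have "convT \<dots> (numT m)"
    by (simp add: convT_head)
  finally show ?thesis .
qed

lemma direct_cps_program:
  assumes "length ms = n" and "convl (foldl LApp t (map numl ms)) (numl m)"
  shows "convT (foldl TApp (TApp (eraseT (direct n)) (TLam Nat (cps L M t (TVar 0)))) (map numT ms))
    (numT m)"
proof -
  have "convT (foldl TApp (TApp (eraseT (direct n)) (TLam Nat (cps L M t (TVar 0)))) (map numT ms))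
      (TApp (TLam Nat (cps L M t (TVar 0))) (args_kont ms))"
    using assms(1) by (rule direct_apply)
  also have "convT \<dots> (cps (\<lambda>i. substT 0 (args_kont ms) (L i)) (\<lambda>i. substT 0 (args_kont ms) (M i))
      t (args_kont ms))"
    by (simp add: convT_head cps_substT)
  also have "convT \<dots> (numT m)"
    using assms(2) by (rule cps_args_kont)
  finally show ?thesis .
qed

text \<open>The T-representation of \<open>f\<close> is \<open>direct n\<close> applied to the typed translation of a
  lambda-mu-T representation of \<open>f\<close>, closed off with empty environments.\<close>
theorem mainTheorem7:
  fixes n :: nat and f :: "nat list \<Rightarrow> nat"
  assumes "representable_lmT n f"
  shows "representable_T n f"
proof -
  obtain t where t: "typl [] [] t (natArr n)"
    and rep: "\<forall>ms. length ms = n \<longrightarrow> convl (foldl LApp t (map numl ms)) (numl (f ms))"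
    using assms unfolding representable_lmT_def by blast
  let ?Z = "\<lambda>_::nat. TZero"
  let ?P = "TLam (kty (natArr n)) (tcps [] ?Z ?Z t (TVar 0))"
  have "typT [kty (natArr n)] (tcps [] ?Z ?Z t (TVar 0)) Nat"
    by (rule tcps_typed(1)[OF t]) (auto intro!: typT.var simp: env_typed_def)
  then have typed: "typT [] (TApp (direct n) ?P) (natArr n)"
    by (intro typT.app[OF typT_direct] typT.lam)
  have "convT (foldl TApp (TApp (direct n) ?P) (map numT ms)) (numT (f ms))"
    if len: "length ms = n" for ms
  proof (rule convT_eraseT_numT)
    have "eraseT (foldl TApp (TApp (direct n) ?P) (map numT ms))
        = foldl TApp (TApp (eraseT (direct n)) (TLam Nat (cps ?Z ?Z t (TVar 0)))) (map numT ms)"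
      by (simp add: eraseT_foldl eraseT_tcps comp_def)
    then show "convT (eraseT (foldl TApp (TApp (direct n) ?P) (map numT ms))) (numT (f ms))"
      using direct_cps_program[OF len] rep len by simp
  qed
  with typed show ?thesis
    unfolding representable_T_def by blast
qed

end
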